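(* There is an absolute constant $C$ such that the following holds. Let $G=(V,E)$ be an $m_\ell \times m_s$ grid graph ($m_\ell\ge m_s$, $m_\ell \ge 3$, $m_s\ge 2$) with every vertex occupied by a robot, and let $E' \subseteq E$ be any set of pairwise vertex-disjoint edges. Then there is a sequence of at most $C$ valid synchronous moves after which, for every edge $(v_1,v_2)\in E'$, the robot initially at $v_1$ is at $v_2$ and the robot initially at $v_2$ is at $v_1$, while every robot initially at a vertex not covered by $E'$ is back at its initial vertex. (This operation is denoted $\textsc{flip}(E')$.)
   Context: The $m_\ell \times m_s$ grid graph has vertex set $\{1,\dots,m_\ell\}\times\{1,\dots,m_s\}$ with edges between vertices at $\ell_1$-distance 1. Valid synchronous moves: from step $t$ to $t+1$ each robot either stays put or moves to an adjacent vertex, subject to (i) no two robots occupying the same vertex afterwards and (ii) no two robots traversing the same edge in opposite directions. *)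

theory Defs
  imports Main
begin

type_synonym vertex = "nat \<times> nat"

definition grid_V :: "nat \<Rightarrow> nat \<Rightarrow> vertex set" where
  "grid_V ml ms = {1..ml} \<times> {1..ms}"

definition grid_adj :: "nat \<Rightarrow> nat \<Rightarrow> vertex \<Rightarrow> vertex \<Rightarrow> bool" where
  "grid_adj ml ms u v \<longleftrightarrow> u \<in> grid_V ml ms \<and> v \<in> grid_V ml ms \<and>
     ((fst u - fst v) + (fst v - fst u) + (snd u - snd v) + (snd v - snd u) = 1)"

definition grid_E :: "nat \<Rightarrow> nat \<Rightarrow> vertex set set" where
  "grid_E ml ms = {{u, v} | u v. grid_adj ml ms u v}"

text \<open>A configuration maps each robot (identified by its initial vertex in grid_V)
  to its current vertex.\<close>
definition valid_move :: "nat \<Rightarrow> nat \<Rightarrow> (vertex \<Rightarrow> vertex) \<Rightarrow> (vertex \<Rightarrow> vertex) \<Rightarrow> bool" where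
  "valid_move ml ms p q \<longleftrightarrow>
     (\<forall>r \<in> grid_V ml ms. q r = p r \<or> grid_adj ml ms (p r) (q r)) \<and>
     inj_on q (grid_V ml ms) \<and>
     (\<forall>r1 \<in> grid_V ml ms. \<forall>r2 \<in> grid_V ml ms. r1 \<noteq> r2 \<longrightarrow>
        \<not> (p r1 \<noteq> q r1 \<and> q r1 = p r2 \<and> q r2 = p r1))"

end

theory Submission
  imports Defs "HOL-Library.Product_Plus" "HOL-Library.Disjoint_Sets" "HOL-Combinatorics.Transposition"
begin

text \<open>
  Every edge of the grid lies in a 3\<times>2 subgrid, and in the 3\<times>2 grid each single edge can be
  flipped by at most five synchronous moves, each a rotation around one of its three cycles (so no two
  robots ever exchange places). Colour an edge {u, u + dir d} by d and the residues of u modulo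
  (5, 3): the 3\<times>2 blocks around edges of one colour are pairwise disjoint, so a whole colour
  class is flipped in parallel by five moves. Running the 30 colour classes one after another
  takes 150 moves, and since the edges of E' are disjoint these flips compose to flip(E').
\<close>

section \<open>Flipping a matching\<close>

definition matching :: "'a set set \<Rightarrow> bool" where
  "matching M \<longleftrightarrow> pairwise disjnt M \<and> (\<forall>e\<in>M. card e = 2)"

text \<open>The THE is only well behaved on matchings; all lemmas about flip assume one.\<close>

definition flip :: "'a set set \<Rightarrow> 'a \<Rightarrow> 'a" where
  "flip M v = (if v \<in> \<Union>M then THE w. {v, w} \<in> M else v)"

lemma matching_subset: "matching M \<Longrightarrow> N \<subseteq> M \<Longrightarrow> matching N"
  unfolding matching_def by (meson pairwise_subset subsetD)

lemma matching_edge_unique: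
  "matching M \<Longrightarrow> e \<in> M \<Longrightarrow> e' \<in> M \<Longrightarrow> v \<in> e \<Longrightarrow> v \<in> e' \<Longrightarrow> e = e'"
  unfolding matching_def pairwise_def disjnt_def by blast

lemma matching_edge_partner:
  assumes "matching M" "e \<in> M" "v \<in> e"
  obtains w where "e = {v, w}"
proof -
  obtain x y where "e = {x, y}" using assms(1,2) unfolding matching_def card_2_iff by blast
  with assms(3) that show thesis by (auto simp: insert_commute)
qed

lemma flip_edge:
  assumes "matching M" "{a, b} \<in> M"
  shows "flip M a = b"
proof -
  have "(THE w. {a, w} \<in> M) = b"
  proof (rule the_equality)
    fix w assume "{a, w} \<in> M"
    then show "w = b"
      using matching_edge_unique[OF assms(1) _ assms(2), of "{a, w}" a] by (auto simp: doubleton_eq_iff)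
  qed fact
  with assms(2) show ?thesis unfolding flip_def by auto
qed

lemma flip_outside: "v \<notin> \<Union>M \<Longrightarrow> flip M v = v"
  by (simp add: flip_def)

lemma flip_transpose:
  assumes "matching M" "{a, b} \<in> M" "\<forall>e\<in>M. v \<in> e \<longrightarrow> e = {a, b}"
  shows "flip M v = transpose a b v"
proof -
  consider "v = a" | "v = b" | "v \<notin> \<Union>M" using assms(3) by blast
  then show ?thesis
  proof cases
    case 1
    then show ?thesis using flip_edge[OF assms(1,2)] by simp
  next
    case 2
    have "{b, a} \<in> M" using assms(2) by (simp add: insert_commute)
    then show ?thesis using 2 flip_edge[OF assms(1)] by simp
  next
    case 3
    moreover from 3 have "v \<noteq> a" "v \<noteq> b" using assms(2) by auto
    ultimately show ?thesis by (simp add: flip_outside)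
  qed
qed

lemma matching_Un_apart:
  assumes "matching (A \<union> B)" "A \<inter> B = {}" "e \<in> A" "x \<in> e"
  shows "x \<notin> \<Union>B"
proof
  assume "x \<in> \<Union>B"
  then obtain e' where e': "e' \<in> B" "x \<in> e'" by blast
  then have "e = e'" using matching_edge_unique[OF assms(1), of e e' x] assms(3,4) by blast
  then show False using assms(2,3) e'(1) by blast
qed

lemma flip_Un:
  assumes "matching (A \<union> B)" "A \<inter> B = {}"
  shows "flip A (flip B v) = flip (A \<union> B) v"
proof -
  have M: "matching A" "matching B" using matching_subset assms(1) by auto
  consider (A) e where "e \<in> A" "v \<in> e" | (B) e where "e \<in> B" "v \<in> e" | (none) "v \<notin> \<Union>(A \<union> B)"
    by blast
  then show ?thesis
  proof cases
    case A
    then obtain w where e: "{v, w} \<in> A" using matching_edge_partner[OF M(1)] by metis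
    have "v \<notin> \<Union>B" using matching_Un_apart[OF assms e] by simp
    then have "flip B v = v" by (rule flip_outside)
    moreover have "flip A v = w" using flip_edge[OF M(1) e] .
    moreover have "flip (A \<union> B) v = w" using flip_edge[OF assms(1)] e by blast
    ultimately show ?thesis by simp
  next
    case B
    then obtain w where e: "{v, w} \<in> B" using matching_edge_partner[OF M(2)] by metis
    have "w \<notin> \<Union>A"
      using matching_Un_apart[of B A, OF _ _ e] assms by (simp add: Un_commute Int_commute)
    then have "flip A w = w" by (rule flip_outside)
    moreover have "flip B v = w" using flip_edge[OF M(2) e] .
    moreover have "flip (A \<union> B) v = w" using flip_edge[OF assms(1)] e by blast
    ultimately show ?thesis by simp
  next
    case none
    then show ?thesis by (simp add: flip_outside)
  qed
qed

section \<open>Synchronous moves as maps on positions\<close>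

text \<open>
  Unlike valid_move, which tracks each robot, is_move describes a move by where it sends the robot
  standing at each position; the last clause rules out two robots swapping along an edge.
\<close>

definition is_move :: "('a \<Rightarrow> 'a \<Rightarrow> bool) \<Rightarrow> 'a set \<Rightarrow> ('a \<Rightarrow> 'a) \<Rightarrow> bool" where
  "is_move adj S g \<longleftrightarrow> g ` S \<subseteq> S \<and> inj_on g S \<and> (\<forall>v\<in>S. g v = v \<or> adj v (g v)) \<and>
     (\<forall>v\<in>S. g v \<noteq> v \<longrightarrow> g (g v) \<noteq> v)"

lemma is_move_image: "is_move adj S g \<Longrightarrow> g ` S \<subseteq> S"
  unfolding is_move_def by blast

lemma valid_move_compose:
  assumes g: "is_move (grid_adj ml ms) (grid_V ml ms) g"
    and p: "inj_on p (grid_V ml ms)" "p ` grid_V ml ms \<subseteq> grid_V ml ms"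
  shows "valid_move ml ms p (g \<circ> p)"
  unfolding valid_move_def
proof (intro conjI ballI impI)
  fix x assume "x \<in> grid_V ml ms"
  then have "p x \<in> grid_V ml ms" using p(2) by blast
  then show "(g \<circ> p) x = p x \<or> grid_adj ml ms (p x) ((g \<circ> p) x)"
    using g unfolding is_move_def by simp
next
  have "inj_on g (grid_V ml ms)" using g unfolding is_move_def by blast
  then show "inj_on (g \<circ> p) (grid_V ml ms)"
    using comp_inj_on[OF p(1) inj_on_subset[OF _ p(2)]] by blast
next
  fix x y assume "x \<in> grid_V ml ms" "y \<in> grid_V ml ms" "x \<noteq> y"
  then have "p x \<in> grid_V ml ms" using p(2) by blast
  then have "g (p x) \<noteq> p x \<Longrightarrow> g (g (p x)) \<noteq> p x" using g unfolding is_move_def by blast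
  then show "\<not> (p x \<noteq> (g \<circ> p) x \<and> (g \<circ> p) x = p y \<and> (g \<circ> p) y = p x)"
    by auto
qed

lemma is_move_fold:
  assumes "\<And>t. is_move adj S (\<sigma> t)"
  shows "fold \<sigma> xs ` S \<subseteq> S \<and> inj_on (fold \<sigma> xs) S"
proof (induction xs rule: rev_induct)
  case (snoc x xs)
  have step: "\<sigma> x ` S \<subseteq> S" "inj_on (\<sigma> x) S" using assms unfolding is_move_def by auto
  have "(\<sigma> x \<circ> fold \<sigma> xs) ` S \<subseteq> S" using step(1) snoc by (auto simp: image_comp[symmetric])
  moreover have "inj_on (\<sigma> x \<circ> fold \<sigma> xs) S"
    using comp_inj_on[OF snoc[THEN conjunct2] inj_on_subset[OF step(2) snoc[THEN conjunct1]]] .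
  ultimately show ?case by (simp only: fold_append fold_Cons fold_Nil id_comp conj_absorb)
qed simp

lemma valid_move_fold_upt:
  assumes "\<And>t. is_move (grid_adj ml ms) (grid_V ml ms) (\<sigma> t)"
  shows "valid_move ml ms (fold \<sigma> [0..<t]) (fold \<sigma> [0..<Suc t])"
  using valid_move_compose[OF assms is_move_fold[OF assms, THEN conjunct2]
      is_move_fold[OF assms, THEN conjunct1]]
  by simp

definition patch :: "'i set \<Rightarrow> ('i \<Rightarrow> 'a set) \<Rightarrow> ('i \<Rightarrow> 'a \<Rightarrow> 'a) \<Rightarrow> 'a \<Rightarrow> 'a" where
  "patch I B f v = (if \<exists>i\<in>I. v \<in> B i then f (SOME i. i \<in> I \<and> v \<in> B i) v else v)"

lemma patch_inside:
  assumes "disjoint_family_on B I" "i \<in> I" "v \<in> B i"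
  shows "patch I B f v = f i v"
proof -
  have "(SOME i. i \<in> I \<and> v \<in> B i) = i"
    using assms unfolding disjoint_family_on_def by (intro some_equality) auto
  then show ?thesis using assms(2,3) unfolding patch_def by auto
qed

lemma patch_outside: "\<forall>i\<in>I. v \<notin> B i \<Longrightarrow> patch I B f v = v"
  unfolding patch_def by auto

lemma fold_patch:
  assumes "disjoint_family_on B I" "\<And>i s. i \<in> I \<Longrightarrow> s \<in> set xs \<Longrightarrow> f i s ` B i \<subseteq> B i"
  shows "fold (\<lambda>s. patch I B (\<lambda>i. f i s)) xs v = patch I B (\<lambda>i. fold (f i) xs) v"
  using assms(2)
proof (induction xs arbitrary: v)
  case Nil
  then show ?case by (simp add: patch_def)
next
  case (Cons x xs)
  show ?case
  proof (cases "\<exists>i\<in>I. v \<in> B i")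
    case True
    then obtain i where i: "i \<in> I" "v \<in> B i" by blast
    then have "f i x v \<in> B i" using Cons.prems by force
    then show ?thesis
      using Cons i patch_inside[OF assms(1) i(1)] by simp
  next
    case False
    then show ?thesis using Cons patch_outside[of I v B] by simp
  qed
qed

lemma patch_in_block:
  assumes "disjoint_family_on B I" "i \<in> I" "v \<in> B i" "f i ` B i \<subseteq> B i"
  shows "patch I B f v \<in> B i"
  using patch_inside[OF assms(1-3)] assms(3,4) by auto

lemma inj_patch:
  assumes disj: "disjoint_family_on B I"
    and image: "\<And>i. i \<in> I \<Longrightarrow> f i ` B i \<subseteq> B i" and inj: "\<And>i. i \<in> I \<Longrightarrow> inj_on (f i) (B i)"
  shows "inj (patch I B f)"
proof (rule injI)
  fix x y assume eq: "patch I B f x = patch I B f y"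
  have in_block: "patch I B f v \<in> B i" if "i \<in> I" "v \<in> B i" for i v
    using patch_in_block[where f = f, OF disj that image[OF that(1)]] .
  consider (both) i j where "i \<in> I" "x \<in> B i" "j \<in> I" "y \<in> B j"
    | (x_only) i where "i \<in> I" "x \<in> B i" "\<forall>j\<in>I. y \<notin> B j"
    | (y_only) j where "j \<in> I" "y \<in> B j" "\<forall>i\<in>I. x \<notin> B i"
    | (neither) "\<forall>i\<in>I. x \<notin> B i" "\<forall>j\<in>I. y \<notin> B j"
    by blast
  then show "x = y"
  proof cases
    case both
    have "patch I B f x \<in> B i \<inter> B j" using in_block[OF both(1,2)] in_block[OF both(3,4)] eq by simp
    then have "i = j" using disj both unfolding disjoint_family_on_def by blast
    then show ?thesis
      using both eq inj[OF both(1)] patch_inside[OF disj] unfolding inj_on_def by simp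
  next
    case x_only
    then show ?thesis using in_block[OF x_only(1,2)] patch_outside[OF x_only(3)] eq by auto
  next
    case y_only
    then show ?thesis using in_block[OF y_only(1,2)] patch_outside[OF y_only(3)] eq by auto
  next
    case neither
    then show ?thesis using patch_outside[OF neither(1)] patch_outside[OF neither(2)] eq by simp
  qed
qed

lemma is_move_patch:
  assumes disj: "disjoint_family_on B I"
    and moves: "\<And>i. i \<in> I \<Longrightarrow> is_move adj (B i) (f i)"
    and sub: "\<And>i. i \<in> I \<Longrightarrow> B i \<subseteq> S"
  shows "is_move adj S (patch I B f)"
proof -
  let ?g = "patch I B f"
  have "?g v \<in> S \<and> (?g v = v \<or> adj v (?g v)) \<and> (?g v \<noteq> v \<longrightarrow> ?g (?g v) \<noteq> v)" if "v \<in> S" for v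
  proof (cases "\<exists>i\<in>I. v \<in> B i")
    case True
    then obtain i where i: "i \<in> I" "v \<in> B i" by blast
    have m: "f i ` B i \<subseteq> B i" "f i v = v \<or> adj v (f i v)" "f i v \<noteq> v \<longrightarrow> f i (f i v) \<noteq> v"
      using moves[OF i(1)] i(2) unfolding is_move_def by auto
    have "?g v = f i v" "?g v \<in> B i" using patch_inside[OF disj i] patch_in_block[where f = f, OF disj i m(1)] .
    then have "?g (?g v) = f i (f i v)" using patch_inside[OF disj i(1)] by simp
    then show ?thesis using \<open>?g v = f i v\<close> \<open>?g v \<in> B i\<close> m(2,3) sub[OF i(1)] by auto
  next
    case False
    then show ?thesis using that patch_outside[of I v B f] by simp
  qed
  moreover have "inj_on ?g S"
    using inj_patch[OF disj] moves unfolding is_move_def by (meson inj_on_subset subset_UNIV)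
  ultimately show ?thesis unfolding is_move_def by blast
qed

definition translate :: "vertex \<Rightarrow> (vertex \<Rightarrow> vertex) \<Rightarrow> vertex \<Rightarrow> vertex" where
  "translate a g v = a + g (v - a)"

lemma add_diff_cancel_vertex [simp]: "(a + w) - a = (w :: vertex)"
  by (simp add: prod_eq_iff)

lemma translate_add [simp]: "translate a g (a + w) = a + g w"
  by (simp add: translate_def)

lemma grid_adj_translate:
  assumes "grid_adj k l w w'" "a + w \<in> grid_V ml ms" "a + w' \<in> grid_V ml ms"
  shows "grid_adj ml ms (a + w) (a + w')"
  using assms unfolding grid_adj_def by simp

lemma is_move_translate:
  assumes g: "is_move (grid_adj k l) (grid_V k l) g" and sub: "(+) a ` grid_V k l \<subseteq> grid_V ml ms"
  shows "is_move (grid_adj ml ms) ((+) a ` grid_V k l) (translate a g)"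
proof -
  have m: "g ` grid_V k l \<subseteq> grid_V k l" "inj_on g (grid_V k l)"
    "\<forall>w\<in>grid_V k l. g w = w \<or> grid_adj k l w (g w)"
    "\<forall>w\<in>grid_V k l. g w \<noteq> w \<longrightarrow> g (g w) \<noteq> w"
    using g unfolding is_move_def by auto
  have "translate a g ` (+) a ` grid_V k l \<subseteq> (+) a ` grid_V k l"
    using m(1) by (auto simp: image_image)
  moreover have "inj_on (translate a g) ((+) a ` grid_V k l)"
    using m(2) by (auto simp: inj_on_def)
  moreover have "translate a g v = v \<or> grid_adj ml ms v (translate a g v)"
    "translate a g v \<noteq> v \<longrightarrow> translate a g (translate a g v) \<noteq> v"
    if v: "v \<in> (+) a ` grid_V k l" for v
  proof -
    obtain w where w: "w \<in> grid_V k l" "v = a + w" using v by blast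
    then have "a + g w \<in> grid_V ml ms" "a + w \<in> grid_V ml ms" using sub m(1) by auto
    then show "translate a g v = v \<or> grid_adj ml ms v (translate a g v)"
      using m(3) w grid_adj_translate[of k l w "g w" a ml ms] by auto
    show "translate a g v \<noteq> v \<longrightarrow> translate a g (translate a g v) \<noteq> v"
      using m(4) w by auto
  qed
  ultimately show ?thesis unfolding is_move_def by blast
qed

lemma fold_translate:
  assumes "\<And>s. s \<in> set xs \<Longrightarrow> g s ` S \<subseteq> S" "w \<in> S"
  shows "fold (\<lambda>s. translate a (g s)) xs (a + w) = a + fold g xs w"
  using assms
proof (induction xs arbitrary: w)
  case (Cons x xs)
  have "g x w \<in> S" using Cons.prems by force
  then show ?case using Cons by simp
qed simp

lemma add_transpose: "a + transpose x y z = transpose (a + x) (a + y) (a + (z :: vertex))"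
  by (simp add: transpose_def)

section \<open>Flipping one edge of the 3\<times>2 grid\<close>

definition rotate_cycle :: "'a list \<Rightarrow> 'a \<Rightarrow> 'a" where
  "rotate_cycle c v = (case map_of (zip c (rotate1 c)) v of None \<Rightarrow> v | Some w \<Rightarrow> w)"

definition left_square :: "vertex list" where "left_square = [(1,1), (2,1), (2,2), (1,2)]"
definition right_square :: "vertex list" where "right_square = [(2,1), (3,1), (3,2), (2,2)]"
definition rim :: "vertex list" where "rim = [(1,1), (2,1), (3,1), (3,2), (2,2), (1,2)]"

lemma grid_V_3_2: "grid_V 3 2 = {(1,1), (2,1), (3,1), (1,2), (2,2), (3,2)}"
  by (auto simp: grid_V_def)

lemma is_move_rotate_cycle:
  assumes "c \<in> {left_square, rev left_square, right_square, rev right_square, rim, rev rim, []}"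
  shows "is_move (grid_adj 3 2) (grid_V 3 2) (rotate_cycle c)"
  using assms unfolding is_move_def grid_V_3_2 inj_on_def
  by (elim insertE emptyE; simp add: rotate_cycle_def left_square_def right_square_def rim_def
      grid_adj_def grid_V_def)

definition dir :: "nat \<Rightarrow> vertex" where "dir d = (if d = 0 then (1, 0) else (0, 1))"

text \<open>
  Five moves of the 3\<times>2 grid whose composite exchanges w and w + dir d (see fold_rotate_gadget);
  the empty cycle is the move in which nobody moves.
\<close>

definition gadget :: "vertex \<Rightarrow> nat \<Rightarrow> vertex list list" where
  "gadget w d =
    (if (w, d) = ((1,1), 0) then [left_square, right_square, rev rim, [], []]
     else if (w, d) = ((2,1), 0) then [rev right_square, rev left_square, rim, [], []]
     else if (w, d) = ((1,2), 0) then [rev left_square, rev right_square, rim, [], []]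
     else if (w, d) = ((2,2), 0) then [right_square, left_square, rev rim, [], []]
     else if (w, d) = ((1,1), 1) then [left_square, left_square, right_square, rev rim, rev left_square]
     else if (w, d) = ((2,1), 1) then [left_square, rev rim, right_square, [], []]
     else [right_square, left_square, rev rim, rev left_square, rim])"

lemma length_gadget: "length (gadget w d) = 5"
  by (simp add: gadget_def)

lemma is_move_gadget:
  "c \<in> set (gadget w d) \<Longrightarrow> is_move (grid_adj 3 2) (grid_V 3 2) (rotate_cycle c)"
  by (rule is_move_rotate_cycle) (auto simp: gadget_def split: if_splits)

lemma grid_3_2_edge_cases:
  assumes "d < 2" "w \<in> grid_V 3 2" "w + dir d \<in> grid_V 3 2"
  shows "(w, d) \<in> {((1,1),0), ((2,1),0), ((1,2),0), ((2,2),0), ((1,1),1), ((2,1),1), ((3,1),1)}"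
proof -
  obtain a b where w: "w = (a, b)" by fastforce
  show ?thesis
    using assms unfolding w grid_V_def dir_def less_2_cases_iff
    by (auto simp: le_Suc_eq numeral_3_eq_3 numeral_2_eq_2)
qed

lemma fold_rotate_gadget:
  assumes "d < 2" "w \<in> grid_V 3 2" "w + dir d \<in> grid_V 3 2" "v \<in> grid_V 3 2"
  shows "fold rotate_cycle (gadget w d) v = transpose w (w + dir d) v"
  using grid_3_2_edge_cases[OF assms(1-3)] assms(4) unfolding grid_V_3_2
  by (elim insertE emptyE; simp add: gadget_def rotate_cycle_def left_square_def right_square_def rim_def
      transpose_def dir_def)

section \<open>Blocks and colours\<close>

lemma grid_edge_dir:
  assumes "grid_adj ml ms a b"
  obtains u d where "d < 2" "{a, b} = {u, u + dir d}"
proof -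
  obtain a1 a2 b1 b2 where ab: "a = (a1, a2)" "b = (b1, b2)" by fastforce
  have "b1 = a1 + 1 \<and> b2 = a2 \<or> a1 = b1 + 1 \<and> a2 = b2 \<or> b2 = a2 + 1 \<and> b1 = a1 \<or> a2 = b2 + 1 \<and> a1 = b1"
    using assms unfolding grid_adj_def ab by auto
  then show thesis
  proof (elim disjE conjE)
    assume "b1 = a1 + 1" "b2 = a2"
    then show thesis using that[of 0 a] by (simp add: ab dir_def)
  next
    assume "a1 = b1 + 1" "a2 = b2"
    then show thesis using that[of 0 b] by (simp add: ab dir_def insert_commute)
  next
    assume "b2 = a2 + 1" "b1 = a1"
    then show thesis using that[of 1 a] by (simp add: ab dir_def)
  next
    assume "a2 = b2 + 1" "a1 = b1"
    then show thesis using that[of 1 b] by (simp add: ab dir_def insert_commute)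
  qed
qed

lemma dir_edge_eq:
  assumes "d < 2" "d' < 2" "{u, u + dir d} = {u', u' + dir d'}"
  shows "u = u' \<and> d = d'"
  using assms unfolding doubleton_eq_iff dir_def less_2_cases_iff by (auto simp: prod_eq_iff)

definition block :: "vertex \<Rightarrow> vertex set" where
  "block a = (+) a ` grid_V 3 2"

text \<open>
  block (anchor ml ms u) is the 3\<times>2 block with lower left corner u, pushed back inside the grid
  when u lies in one of the last two columns or the last row.
\<close>

definition anchor :: "nat \<Rightarrow> nat \<Rightarrow> vertex \<Rightarrow> vertex" where
  "anchor ml ms u = (min (fst u) (ml - 2) - 1, min (snd u) (ms - 1) - 1)"

lemma anchor_block:
  assumes "3 \<le> ml" "2 \<le> ms" "d < 2" "u \<in> grid_V ml ms" "u + dir d \<in> grid_V ml ms"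
  shows "block (anchor ml ms u) \<subseteq> grid_V ml ms"
    and "u - anchor ml ms u \<in> grid_V 3 2" "u - anchor ml ms u + dir d \<in> grid_V 3 2"
    and "anchor ml ms u + (u - anchor ml ms u) = u"
  using assms unfolding block_def anchor_def grid_V_def dir_def less_2_cases_iff
  by (auto simp: prod_eq_iff)

lemma block_near:
  assumes "v \<in> block (anchor ml ms u)" "u \<in> grid_V ml ms"
  shows "fst v \<le> fst u + 2" "fst u \<le> fst v + 2" "snd v \<le> snd u + 1" "snd u \<le> snd v + 1"
  using assms unfolding block_def anchor_def grid_V_def by auto

text \<open>
  Equal colours force equal directions and base points congruent modulo (5, 3), which are then so
  far apart that their blocks are disjoint (same_colour_blocks_disjoint).
\<close>

definition colour :: "vertex \<Rightarrow> nat \<Rightarrow> nat" where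
  "colour u d = d + 2 * (fst u mod 5) + 10 * (snd u mod 3)"

lemma colour_less: "d < 2 \<Longrightarrow> colour u d < 30"
  unfolding colour_def by linarith

lemma colour_mod_2: "d < 2 \<Longrightarrow> colour u d mod 2 = d"
proof -
  assume "d < 2"
  have "colour u d = d + 2 * (fst u mod 5 + 5 * (snd u mod 3))" unfolding colour_def by simp
  moreover have "(d + 2 * k) mod 2 = d" for k using \<open>d < 2\<close> by simp
  ultimately show ?thesis by metis
qed

lemma colour_eq:
  assumes "d < 2" "d' < 2" "colour u d = colour u' d'"
  shows "d = d'" "fst u mod 5 = fst u' mod 5" "snd u mod 3 = snd u' mod 3"
proof -
  show "d = d'" using colour_mod_2 assms by metis
  then have eq: "fst u mod 5 + 5 * (snd u mod 3) = fst u' mod 5 + 5 * (snd u' mod 3)"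
    using assms(3) unfolding colour_def by simp
  then have "(fst u mod 5 + 5 * (snd u mod 3)) mod 5 = (fst u' mod 5 + 5 * (snd u' mod 3)) mod 5"
    by simp
  then show "fst u mod 5 = fst u' mod 5" by simp
  with eq show "snd u mod 3 = snd u' mod 3" by simp
qed

lemma mod_eq_near_imp_eq:
  assumes "(x::nat) mod m = y mod m" "x < y + m" "y < x + m"
  shows "x = y"
proof -
  have *: "a = b" if h: "a mod m = b mod m" "a \<le> b" "b < a + m" for a b :: nat
  proof -
    obtain k where k: "b = a + m * k" using mod_eq_nat2E[OF h(1,2)] .
    with h(3) have "m * k < m * 1" by simp
    then have "k = 0" by (simp only: mult_less_cancel1) simp
    with k show ?thesis by simp
  qed
  show ?thesis
  proof (cases "x \<le> y")
    case True
    then show ?thesis using *[of x y] assms by simp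
  next
    case False
    then show ?thesis using *[of y x] assms by simp
  qed
qed

lemma same_colour_blocks_disjoint:
  assumes "d < 2" "colour u d = colour u' d" "u \<in> grid_V ml ms" "u' \<in> grid_V ml ms" "u \<noteq> u'"
  shows "block (anchor ml ms u) \<inter> block (anchor ml ms u') = {}"
proof (rule ccontr)
  assume "block (anchor ml ms u) \<inter> block (anchor ml ms u') \<noteq> {}"
  then obtain v where "v \<in> block (anchor ml ms u)" "v \<in> block (anchor ml ms u')" by blast
  note near = block_near[OF this(1) assms(3)] block_near[OF this(2) assms(4)]
  have "fst u = fst u'"
    using mod_eq_near_imp_eq[OF colour_eq(2)[OF assms(1,1,2)]] near by linarith
  moreover have "snd u = snd u'"
    using mod_eq_near_imp_eq[OF colour_eq(3)[OF assms(1,1,2)]] near by linarith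
  ultimately show False using assms(5) by (simp add: prod_eq_iff)
qed

lemma grid_E_subset_grid_V: "e \<in> grid_E ml ms \<Longrightarrow> e \<subseteq> grid_V ml ms"
  unfolding grid_E_def grid_adj_def by blast

section \<open>Flipping a matching of the grid\<close>

locale grid_matching =
  fixes ml ms :: nat and E' :: "vertex set set"
  assumes ml: "3 \<le> ml" and ms: "2 \<le> ms" and edges_grid: "E' \<subseteq> grid_E ml ms"
    and edges_disjoint: "\<forall>e1\<in>E'. \<forall>e2\<in>E'. e1 \<noteq> e2 \<longrightarrow> e1 \<inter> e2 = {}"
begin

lemma matching_edges: "matching E'"
  unfolding matching_def
proof
  show "pairwise disjnt E'" using edges_disjoint unfolding pairwise_def disjnt_def by blast
  show "\<forall>e\<in>E'. card e = 2"
  proof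
    fix e assume "e \<in> E'"
    then obtain a b where "e = {a, b}" "grid_adj ml ms a b" using edges_grid unfolding grid_E_def by blast
    moreover from this(2) have "a \<noteq> b" unfolding grid_adj_def by auto
    ultimately show "card e = 2" by simp
  qed
qed

definition bases :: "nat \<Rightarrow> vertex set" where
  "bases r = {u. {u, u + dir (r mod 2)} \<in> E' \<and> colour u (r mod 2) = r}"

definition round_edges :: "nat \<Rightarrow> vertex set set" where
  "round_edges r = (\<lambda>u. {u, u + dir (r mod 2)}) ` bases r"

definition local_step :: "nat \<Rightarrow> vertex \<Rightarrow> nat \<Rightarrow> vertex \<Rightarrow> vertex" where
  "local_step r u s = translate (anchor ml ms u) (rotate_cycle (gadget (u - anchor ml ms u) (r mod 2) ! s))"

definition round_step :: "nat \<Rightarrow> nat \<Rightarrow> vertex \<Rightarrow> vertex" where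
  "round_step r s = patch (bases r) (\<lambda>u. block (anchor ml ms u)) (\<lambda>u. local_step r u s)"

definition schedule :: "nat \<Rightarrow> vertex \<Rightarrow> vertex" where
  "schedule t = round_step (t div 5) (t mod 5)"

lemma bases_grid:
  assumes "u \<in> bases r"
  shows "u \<in> grid_V ml ms" "u + dir (r mod 2) \<in> grid_V ml ms"
  using assms edges_grid grid_E_subset_grid_V unfolding bases_def by blast+

lemma bases_anchor_block:
  assumes "u \<in> bases r"
  shows "block (anchor ml ms u) \<subseteq> grid_V ml ms" "u - anchor ml ms u \<in> grid_V 3 2"
    "u - anchor ml ms u + dir (r mod 2) \<in> grid_V 3 2" "anchor ml ms u + (u - anchor ml ms u) = u"
  using anchor_block[OF ml ms _ bases_grid[OF assms]] by auto

lemma base_edge_subset_block: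
  assumes "u \<in> bases r"
  shows "{u, u + dir (r mod 2)} \<subseteq> block (anchor ml ms u)"
proof -
  note a = bases_anchor_block[OF assms]
  have "u = anchor ml ms u + (u - anchor ml ms u)" using a(4) by simp
  moreover have "u + dir (r mod 2) = anchor ml ms u + (u - anchor ml ms u + dir (r mod 2))"
    using a(4) by (metis add.assoc)
  ultimately show ?thesis using a(2,3) unfolding block_def by blast
qed

lemma blocks_disjoint: "disjoint_family_on (\<lambda>u. block (anchor ml ms u)) (bases r)"
  unfolding disjoint_family_on_def
proof (intro ballI impI)
  fix u u' assume "u \<in> bases r" "u' \<in> bases r" "u \<noteq> u'"
  then show "block (anchor ml ms u) \<inter> block (anchor ml ms u') = {}"
    using same_colour_blocks_disjoint[of "r mod 2" u u'] bases_grid unfolding bases_def by simp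
qed

lemma local_step_move:
  assumes "u \<in> bases r" "s < 5"
  shows "is_move (grid_adj ml ms) (block (anchor ml ms u)) (local_step r u s)"
proof -
  have "gadget (u - anchor ml ms u) (r mod 2) ! s \<in> set (gadget (u - anchor ml ms u) (r mod 2))"
    using assms(2) by (simp add: length_gadget)
  from is_move_translate[OF is_move_gadget[OF this] bases_anchor_block(1)[OF assms(1), unfolded block_def]]
  show ?thesis unfolding local_step_def block_def .
qed

lemma schedule_move: "is_move (grid_adj ml ms) (grid_V ml ms) (schedule t)"
  unfolding schedule_def round_step_def
  by (rule is_move_patch[OF blocks_disjoint local_step_move bases_anchor_block(1)]) auto

lemma fold_local_step:
  assumes "u \<in> bases r" "v \<in> block (anchor ml ms u)"
  shows "fold (local_step r u) [0..<5] v = transpose u (u + dir (r mod 2)) v"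
proof -
  define a where "a = anchor ml ms u"
  define w where "w = u - a"
  define G where "G = gadget w (r mod 2)"
  note A = bases_anchor_block[OF assms(1), folded a_def, folded w_def]
  obtain x where x: "x \<in> grid_V 3 2" "v = a + x" using assms(2) unfolding block_def a_def by blast
  have steps: "rotate_cycle (G ! s) ` grid_V 3 2 \<subseteq> grid_V 3 2" if "s \<in> set [0..<5]" for s
    using is_move_gadget[of "G ! s" w "r mod 2"] that by (simp add: G_def length_gadget is_move_def)
  have "fold (local_step r u) [0..<5] v = fold (\<lambda>s. translate a (rotate_cycle (G ! s))) [0..<5] (a + x)"
    by (simp add: local_step_def[abs_def] x(2) a_def w_def G_def)
  also have "\<dots> = a + fold (\<lambda>s. rotate_cycle (G ! s)) [0..<5] x"
    by (rule fold_translate[OF steps x(1)])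
  also have "fold (\<lambda>s. rotate_cycle (G ! s)) [0..<5] = fold rotate_cycle G"
    using fold_map[of rotate_cycle "(!) G" "[0..<length G]"] map_nth[of G] by (simp add: G_def length_gadget comp_def)
  also have "fold rotate_cycle G x = transpose w (w + dir (r mod 2)) x"
    using fold_rotate_gadget[of "r mod 2" w x] A x(1) by (simp add: G_def)
  also have "a + transpose w (w + dir (r mod 2)) x = transpose u (u + dir (r mod 2)) v"
    using A(4) by (simp add: add_transpose x(2) add.assoc[symmetric])
  finally show ?thesis .
qed

lemma round_edges_subset: "round_edges r \<subseteq> E'"
  unfolding round_edges_def bases_def by blast

lemma fold_round_step: "fold (round_step r) [0..<5] v = flip (round_edges r) v"
proof -
  have M: "matching (round_edges r)" using matching_subset[OF matching_edges round_edges_subset] .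
  have fold_eq: "fold (round_step r) [0..<5] v =
      patch (bases r) (\<lambda>u. block (anchor ml ms u)) (\<lambda>u. fold (local_step r u) [0..<5]) v"
    unfolding round_step_def
    by (rule fold_patch[OF blocks_disjoint is_move_image[OF local_step_move]]) simp_all
  show ?thesis
  proof (cases "\<exists>u\<in>bases r. v \<in> block (anchor ml ms u)")
    case True
    then obtain u where u: "u \<in> bases r" "v \<in> block (anchor ml ms u)" by blast
    have edge: "{u, u + dir (r mod 2)} \<in> round_edges r" using u(1) unfolding round_edges_def by blast
    have "\<forall>e\<in>round_edges r. v \<in> e \<longrightarrow> e = {u, u + dir (r mod 2)}"
    proof (intro ballI impI)
      fix e assume e: "e \<in> round_edges r" "v \<in> e"
      then obtain u' where u': "u' \<in> bases r" "e = {u', u' + dir (r mod 2)}"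
        unfolding round_edges_def by blast
      then have "v \<in> block (anchor ml ms u')" using base_edge_subset_block e(2) by blast
      then have "u' = u"
        using disjoint_family_onD[OF blocks_disjoint u'(1) u(1)] u(2) by blast
      then show "e = {u, u + dir (r mod 2)}" using u'(2) by simp
    qed
    then have "flip (round_edges r) v = transpose u (u + dir (r mod 2)) v"
      by (rule flip_transpose[OF M edge])
    then show ?thesis
      using fold_eq patch_inside[OF blocks_disjoint u] fold_local_step[OF u] by simp
  next
    case False
    then have "v \<notin> \<Union>(round_edges r)" using base_edge_subset_block unfolding round_edges_def by blast
    then have "flip (round_edges r) v = v" by (rule flip_outside)
    moreover have "fold (round_step r) [0..<5] v = v" using fold_eq False by (simp add: patch_outside)
    ultimately show ?thesis by simp
  qed
qed

lemma round_edges_disjoint: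
  assumes "r \<noteq> r'"
  shows "round_edges r \<inter> round_edges r' = {}"
proof (rule ccontr)
  assume "round_edges r \<inter> round_edges r' \<noteq> {}"
  then obtain u u' where u: "u \<in> bases r" "u' \<in> bases r'"
    and eq: "{u, u + dir (r mod 2)} = {u', u' + dir (r' mod 2)}"
    unfolding round_edges_def by blast
  have "u = u' \<and> r mod 2 = r' mod 2" using dir_edge_eq[OF _ _ eq] by simp
  then show False using u assms unfolding bases_def by auto
qed

lemma rounds_cover: "(\<Union>r<30. round_edges r) = E'"
proof
  show "(\<Union>r<30. round_edges r) \<subseteq> E'" using round_edges_subset by blast
  show "E' \<subseteq> (\<Union>r<30. round_edges r)"
  proof
    fix e assume e: "e \<in> E'"
    then obtain a b where "e = {a, b}" "grid_adj ml ms a b" using edges_grid unfolding grid_E_def by blast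
    then obtain u d where d: "d < 2" "e = {u, u + dir d}" using grid_edge_dir by metis
    then have "u \<in> bases (colour u d)" using e colour_mod_2 unfolding bases_def by simp
    then have "e \<in> round_edges (colour u d)" using d colour_mod_2 unfolding round_edges_def by auto
    then show "e \<in> (\<Union>r<30. round_edges r)" using colour_less[OF d(1)] by blast
  qed
qed

lemma fold_schedule_round: "fold schedule [5 * r..<5 * r + 5] v = fold (round_step r) [0..<5] v"
proof -
  have "fold schedule [5 * r..<5 * r + 5] v = fold (schedule \<circ> (\<lambda>s. s + 5 * r)) [0..<5] v"
    using fold_map[of schedule "\<lambda>s. s + 5 * r" "[0..<5]"] by (simp add: map_add_upt add.commute)
  also have "\<dots> = fold (round_step r) [0..<5] v"
    by (rule fold_cong) (auto simp: schedule_def)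
  finally show ?thesis .
qed

lemma fold_schedule_rounds: "fold schedule [0..<5 * r] v = flip (\<Union>i<r. round_edges i) v"
proof (induction r arbitrary: v)
  case (Suc r)
  have M: "matching (round_edges r \<union> (\<Union>i<r. round_edges i))"
    by (rule matching_subset[OF matching_edges]) (use round_edges_subset in blast)
  have D: "round_edges r \<inter> (\<Union>i<r. round_edges i) = {}"
  proof (intro equals0I)
    fix e assume "e \<in> round_edges r \<inter> (\<Union>i<r. round_edges i)"
    then obtain i where "i < r" "e \<in> round_edges r" "e \<in> round_edges i" by blast
    then show False using round_edges_disjoint[of r i] by blast
  qed
  have "fold schedule [0..<5 * Suc r] v = fold schedule [5 * r..<5 * r + 5] (fold schedule [0..<5 * r] v)"
    using upt_add_eq_append[of 0 "5 * r" 5] by (simp add: add.commute)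
  also have "\<dots> = flip (round_edges r) (flip (\<Union>i<r. round_edges i) v)"
    unfolding fold_schedule_round fold_round_step Suc.IH ..
  also have "\<dots> = flip (\<Union>i<Suc r. round_edges i) v"
    using flip_Un[OF M D] by (simp add: lessThan_Suc)
  finally show ?case .
qed (simp add: flip_def)

lemma fold_schedule_flips: "fold schedule [0..<150] = flip E'"
  using fold_schedule_rounds[of 30] rounds_cover by (simp add: fun_eq_iff)

end

theorem lemma2:
  shows "\<exists>C::nat. \<forall>ml ms::nat. \<forall>E'::vertex set set.
     ml \<ge> ms \<longrightarrow> ml \<ge> 3 \<longrightarrow> ms \<ge> 2 \<longrightarrow>
     E' \<subseteq> grid_E ml ms \<longrightarrow>
     (\<forall>e1 \<in> E'. \<forall>e2 \<in> E'. e1 \<noteq> e2 \<longrightarrow> e1 \<inter> e2 = {}) \<longrightarrow>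
     (\<exists>(T::nat) (seq::nat \<Rightarrow> vertex \<Rightarrow> vertex).
        T \<le> C \<and>
        (\<forall>v \<in> grid_V ml ms. seq 0 v = v) \<and>
        (\<forall>t < T. valid_move ml ms (seq t) (seq (Suc t))) \<and>
        (\<forall>v1 v2. {v1, v2} \<in> E' \<longrightarrow> seq T v1 = v2) \<and>
        (\<forall>v \<in> grid_V ml ms. v \<notin> \<Union>E' \<longrightarrow> seq T v = v))"
proof (rule exI[of _ 150], intro allI impI)
  fix ml ms :: nat and E' :: "vertex set set"
  assume "ms \<le> ml" "3 \<le> ml" "2 \<le> ms" "E' \<subseteq> grid_E ml ms"
    "\<forall>e1\<in>E'. \<forall>e2\<in>E'. e1 \<noteq> e2 \<longrightarrow> e1 \<inter> e2 = {}"
  then interpret grid_matching ml ms E' by unfold_locales simp_all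
  let ?seq = "\<lambda>t. fold schedule [0..<t]"
  have "\<forall>t<150. valid_move ml ms (?seq t) (?seq (Suc t))"
    using valid_move_fold_upt[where \<sigma> = schedule, OF schedule_move] by blast
  moreover have "\<forall>v1 v2. {v1, v2} \<in> E' \<longrightarrow> ?seq 150 v1 = v2"
    using flip_edge[OF matching_edges] fold_schedule_flips by simp
  moreover have "\<forall>v \<in> grid_V ml ms. v \<notin> \<Union>E' \<longrightarrow> ?seq 150 v = v"
    using flip_outside[of _ E'] fold_schedule_flips by auto
  ultimately show "\<exists>T seq. T \<le> 150 \<and> (\<forall>v\<in>grid_V ml ms. seq 0 v = v) \<and>
      (\<forall>t<T. valid_move ml ms (seq t) (seq (Suc t))) \<and>
      (\<forall>v1 v2. {v1, v2} \<in> E' \<longrightarrow> seq T v1 = v2) \<and>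
      (\<forall>v\<in>grid_V ml ms. v \<notin> \<Union>E' \<longrightarrow> seq T v = v)"
    by (intro exI[of _ 150] exI[of _ ?seq]) simp
qed

end
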